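(* Every flip automata network has invariant histories: for every flip automata network $\mathcal{A}=(T,S,\{f_i\}_{i\in I})$ and every initial configuration, the update history of each individual node (the sequence of distinct successive states the node takes) is the same under every update schedule.
   Context: A flip automata network (FAN) is a triple $\mathcal{A}=(T,S,\{f_i\}_{i\in I})$ where $T=(I,E)$ is an undirected graph with vertex set $I=\{v_i\}$ and edges $E\subseteq\{\{v_i,v_j\}: i\neq j\}$, each edge carrying a direction indicator in $\{\nearrow,\swarrow\}$ ($\nearrow$ points to the endpoint with larger index, $\swarrow$ to the endpoint with smaller index); the neighborhood $N(v_i)=\{v\in I:\{v,v_i\}\in E\}$ is finite for every $v_i$; $S$ is a state set; and for each $i$, $f_i: S^{N(v_i)\cup\{v_i\}}\to S\times\{\nearrow,\swarrow\}^{N(v_i)}$ is the flip function of $v_i$. A configuration assigns a state to each node and a direction indicator to each edge. The function $f_i$ is applicable only if the direction indicators on all edges between $v_i$ and its neighbors point towards $v_i$; applying it may update the state of $v_i$ and flip the direction indicator on any of the edges incident to $v_i$ (as prescribed by its output). An update schedule is a function $\zeta:\mathbb{N}\to\mathcal{P}(I)$; at time $t$ the flip functions of the nodes in $\zeta(t)$ are applied (where applicable). The update history of a node records the sequence of states it takes, recording only genuine state changes (ignoring updates that do not change the state and the times at which they occur). Invariant histories means all update schedules from the same initial configuration yield the same update history for every node. *)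

theory Defs
  imports Main
begin

text \<open>The undirected graph T is given by a symmetric irreflexive adjacency relation adj;
  an edge is the two-element set {i, j}.  The direction indicator of an edge is
  Up (points to the endpoint with larger index) or Down (smaller index).\<close>

datatype dir = Up | Down

definition points_to :: "dir \<Rightarrow> 'i::linorder set \<Rightarrow> 'i \<Rightarrow> bool" where
  "points_to d e i \<longleftrightarrow> (d = Up \<and> i = Max e) \<or> (d = Down \<and> i = Min e)"

definition applicable :: "('i::linorder \<Rightarrow> 'i \<Rightarrow> bool) \<Rightarrow> ('i set \<Rightarrow> dir) \<Rightarrow> 'i \<Rightarrow> bool" where
  "applicable adj \<delta> i \<longleftrightarrow> (\<forall>j. adj i j \<longrightarrow> points_to (\<delta> {i, j}) {i, j} i)"

text \<open>The input of f_i: the states on the closed neighbourhood N(i) \<union> {i} only.\<close>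
definition local_view :: "('i \<Rightarrow> 'i \<Rightarrow> bool) \<Rightarrow> ('i \<Rightarrow> 's) \<Rightarrow> 'i \<Rightarrow> ('i \<Rightarrow> 's)" where
  "local_view adj \<sigma> i = (\<lambda>j. if j = i \<or> adj i j then \<sigma> j else undefined)"

definition fires :: "('i::linorder \<Rightarrow> 'i \<Rightarrow> bool) \<Rightarrow> 'i set \<Rightarrow> ('i set \<Rightarrow> dir) \<Rightarrow> 'i \<Rightarrow> bool" where
  "fires adj Z \<delta> i \<longleftrightarrow> i \<in> Z \<and> applicable adj \<delta> i"

text \<open>One time step: configuration = (node states, edge indicators).  The output
  of f_i gives the new state of i and the new indicators of the edges {i,j}, j \<in> N(i).\<close>
definition step ::
  "('i::linorder \<Rightarrow> 'i \<Rightarrow> bool) \<Rightarrow> ('i \<Rightarrow> ('i \<Rightarrow> 's) \<Rightarrow> 's \<times> ('i \<Rightarrow> dir))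
   \<Rightarrow> 'i set \<Rightarrow> ('i \<Rightarrow> 's) \<times> ('i set \<Rightarrow> dir) \<Rightarrow> ('i \<Rightarrow> 's) \<times> ('i set \<Rightarrow> dir)" where
  "step adj f Z c = (case c of (\<sigma>, \<delta>) \<Rightarrow>
     ((\<lambda>i. if fires adj Z \<delta> i then fst (f i (local_view adj \<sigma> i)) else \<sigma> i),
      (\<lambda>e. if (\<exists>a b. e = {a, b} \<and> adj a b) then
              (if fires adj Z \<delta> (Min e) then snd (f (Min e) (local_view adj \<sigma> (Min e))) (Max e)
               else if fires adj Z \<delta> (Max e) then snd (f (Max e) (local_view adj \<sigma> (Max e))) (Min e)
               else \<delta> e)
            else \<delta> e)))"

primrec run ::
  "('i::linorder \<Rightarrow> 'i \<Rightarrow> bool) \<Rightarrow> ('i \<Rightarrow> ('i \<Rightarrow> 's) \<Rightarrow> 's \<times> ('i \<Rightarrow> dir))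
   \<Rightarrow> (nat \<Rightarrow> 'i set) \<Rightarrow> ('i \<Rightarrow> 's) \<times> ('i set \<Rightarrow> dir) \<Rightarrow> nat \<Rightarrow> ('i \<Rightarrow> 's) \<times> ('i set \<Rightarrow> dir)" where
  "run adj f \<zeta> c0 0 = c0"
| "run adj f \<zeta> c0 (Suc t) = step adj f (\<zeta> t) (run adj f \<zeta> c0 t)"

text \<open>Update history of a state sequence x: the sequence of distinct successive
  states (stuttering removed), possibly infinite.  It is represented by the set of
  all its nonempty finite prefixes, which determines it uniquely.\<close>
definition history :: "(nat \<Rightarrow> 's) \<Rightarrow> 's list set" where
  "history x = range (\<lambda>t. remdups_adj (map x [0..<Suc t]))"

definition fair_schedule :: "(nat \<Rightarrow> 'i set) \<Rightarrow> bool" where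
  "fair_schedule \<zeta> \<longleftrightarrow> (\<forall>i t. \<exists>t'\<ge>t. i \<in> \<zeta> t')"

end

theory Submission
  imports Defs
begin

text \<open>The indicator of an edge points to exactly one endpoint, and only that endpoint may fire;
  so adjacent nodes never fire simultaneously, and the indicator of an edge is determined by how
  often each endpoint has fired together with the local views seen at these firings.
  By induction on time in one fair run, the k-th firing of every node is matched by a k-th
  firing of that node in any other fair run, seeing the same local view: at matched firings the
  neighbours have fired equally often because the edge points to the firing node, and the
  matching firing exists because otherwise all edges at the node would eventually point to it
  and fairness would make it fire. Hence the state of a node is a function of its number of
  firings, both runs reach the same numbers of firings, and the history, which forgets how long
  each state is held, is the same.\<close>

definition stepwise :: "(nat \<Rightarrow> nat) \<Rightarrow> bool" where
  "stepwise g \<longleftrightarrow> (\<forall>t. g (Suc t) = g t \<or> g (Suc t) = Suc (g t))"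

lemma stepwise_mono: "stepwise g \<Longrightarrow> mono g"
  unfolding stepwise_def mono_iff_le_Suc by (metis le_SucI order_refl)

lemma stepwise_crossing:
  assumes "stepwise g" "a \<le> b" "g a \<le> n" "n < g b"
  obtains u where "a \<le> u" "u < b" "g u = n" "g (Suc u) = Suc n"
  using assms(2-4)
proof (induction b arbitrary: thesis)
  case 0
  then show ?case by simp
next
  case (Suc b)
  have "a \<noteq> Suc b"
    using Suc.prems(3,4) by auto
  with Suc.prems(2) have "a \<le> b" by simp
  show ?case
  proof (cases "n < g b")
    case True
    show ?thesis
      by (rule Suc.IH) (use Suc.prems(1) \<open>a \<le> b\<close> True Suc.prems(3) in auto)
  next
    case False
    moreover have "g (Suc b) = g b \<or> g (Suc b) = Suc (g b)"
      using assms(1) by (simp add: stepwise_def)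
    ultimately have "g b = n" "g (Suc b) = Suc n"
      using Suc.prems(4) by auto
    with \<open>a \<le> b\<close> show ?thesis by (intro Suc.prems(1)) auto
  qed
qed

lemma stepwise_attains:
  assumes "stepwise g" "a \<le> b" "g a \<le> k" "k \<le> g b"
  obtains u where "a \<le> u" "u \<le> b" "g u = k"
proof (cases "k = g b")
  case False
  with assms obtain u where "a \<le> u" "u < b" "g u = k"
    by (elim stepwise_crossing) auto
  then show ?thesis by (intro that) auto
qed (use assms in auto)

lemma history_reindex:
  assumes "stepwise c" "c 0 = 0" and x_Y: "\<And>t. x t = Y (c t)"
  shows "history x = (\<lambda>k. remdups_adj (map Y [0..<Suc k])) ` range c"
proof -
  have "remdups_adj (map x [0..<Suc t]) = remdups_adj (map Y [0..<Suc (c t)])" for t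
  proof (induction t)
    case 0
    then show ?case by (simp add: x_Y assms(2))
  next
    case (Suc t)
    have "remdups_adj (map x [0..<Suc (Suc t)])
        = remdups_adj (map x [0..<Suc t]) @ (if x t = x (Suc t) then [] else [x (Suc t)])"
      using remdups_adj_append_two[of "map x [0..<t]" "x t" "x (Suc t)"] by simp
    also have "\<dots> = remdups_adj (map Y [0..<Suc (c t)])
        @ (if Y (c t) = Y (c (Suc t)) then [] else [Y (c (Suc t))])"
      by (simp only: Suc.IH x_Y)
    also have "\<dots> = remdups_adj (map Y [0..<Suc (c (Suc t))])"
    proof (cases "c (Suc t) = c t")
      case False
      then have "c (Suc t) = Suc (c t)" using assms(1) unfolding stepwise_def by metis
      then show ?thesis
        using remdups_adj_append_two[of "map Y [0..<c t]" "Y (c t)" "Y (Suc (c t))"] by simp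
    qed simp
    finally show ?case .
  qed
  then have "(\<lambda>t. remdups_adj (map x [0..<Suc t])) = (\<lambda>k. remdups_adj (map Y [0..<Suc k])) \<circ> c"
    by (simp only: comp_def)
  then show ?thesis
    by (simp only: history_def image_comp)
qed

lemma points_to_unique:
  fixes i j :: "'i::linorder"
  shows "i \<noteq> j \<Longrightarrow> points_to d {i, j} i \<Longrightarrow> \<not> points_to d {i, j} j"
  by (cases d) (auto simp: points_to_def max_def min_def split: if_splits)

locale flip_network =
  fixes adj :: "'i::linorder \<Rightarrow> 'i \<Rightarrow> bool"
    and f :: "'i \<Rightarrow> ('i \<Rightarrow> 's) \<Rightarrow> 's \<times> ('i \<Rightarrow> dir)"
    and c0 :: "('i \<Rightarrow> 's) \<times> ('i set \<Rightarrow> dir)"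
  assumes adj_sym: "adj i j \<Longrightarrow> adj j i"
    and adj_irrefl: "\<not> adj i i"
    and finite_neighbours: "finite {j. adj i j}"
begin

definition node_state :: "(nat \<Rightarrow> 'i set) \<Rightarrow> nat \<Rightarrow> 'i \<Rightarrow> 's" where
  "node_state z t = fst (run adj f z c0 t)"

definition edge_dir :: "(nat \<Rightarrow> 'i set) \<Rightarrow> nat \<Rightarrow> 'i set \<Rightarrow> dir" where
  "edge_dir z t = snd (run adj f z c0 t)"

definition fires_at :: "(nat \<Rightarrow> 'i set) \<Rightarrow> nat \<Rightarrow> 'i \<Rightarrow> bool" where
  "fires_at z t i \<longleftrightarrow> fires adj (z t) (edge_dir z t) i"

primrec firings :: "(nat \<Rightarrow> 'i set) \<Rightarrow> 'i \<Rightarrow> nat \<Rightarrow> nat" where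
  "firings z i 0 = 0"
| "firings z i (Suc t) = (if fires_at z t i then Suc (firings z i t) else firings z i t)"

lemma node_state_0: "node_state z 0 = fst c0"
  by (simp add: node_state_def)

lemma edge_dir_0: "edge_dir z 0 = snd c0"
  by (simp add: edge_dir_def)

lemma node_state_Suc:
  "node_state z (Suc t) i =
     (if fires_at z t i then fst (f i (local_view adj (node_state z t) i)) else node_state z t i)"
  by (simp add: node_state_def edge_dir_def fires_at_def step_def split: prod.split)

lemma fires_at_points_to:
  "fires_at z t i \<Longrightarrow> adj i j \<Longrightarrow> points_to (edge_dir z t {i, j}) {i, j} i"
  by (simp add: fires_at_def fires_def applicable_def)

lemma not_fires_at_if_points_to:
  assumes "adj i j" "points_to (edge_dir z t {i, j}) {i, j} i"
  shows "\<not> fires_at z t j"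
proof
  assume "fires_at z t j"
  then have "points_to (edge_dir z t {i, j}) {i, j} j"
    using fires_at_points_to[of z t j i] adj_sym[OF assms(1)] by (simp add: insert_commute)
  moreover have "i \<noteq> j"
    using assms(1) adj_irrefl by auto
  ultimately show False
    using points_to_unique assms(2) by blast
qed

lemma adjacent_not_both_fire: "adj i j \<Longrightarrow> fires_at z t i \<Longrightarrow> \<not> fires_at z t j"
  using fires_at_points_to not_fires_at_if_points_to by blast

lemma edge_dir_Suc:
  assumes "adj i j"
  shows "edge_dir z (Suc t) {i, j} =
    (if fires_at z t i then snd (f i (local_view adj (node_state z t) i)) j
     else if fires_at z t j then snd (f j (local_view adj (node_state z t) j)) i
     else edge_dir z t {i, j})"
proof -
  obtain \<sigma> \<delta> where run: "run adj f z c0 t = (\<sigma>, \<delta>)"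
    by fastforce
  have "\<exists>a b. {i, j} = {a, b} \<and> adj a b"
    using assms by blast
  moreover have "i \<noteq> j"
    using assms adj_irrefl by auto
  ultimately show ?thesis
    using adjacent_not_both_fire[OF assms, of z t]
    by (auto simp: edge_dir_def node_state_def fires_at_def run step_def min_def max_def)
qed

lemma stepwise_firings: "stepwise (firings z i)"
  by (simp add: stepwise_def)

lemma firings_mono: "a \<le> b \<Longrightarrow> firings z i a \<le> firings z i b"
  using stepwise_mono[OF stepwise_firings] by (simp add: monoD)

lemma stepwise_firings_sum: "adj i j \<Longrightarrow> stepwise (\<lambda>t. firings z i t + firings z j t)"
  using adjacent_not_both_fire by (auto simp: stepwise_def)

lemma not_fires_at_if_firings_eq:
  assumes "a \<le> v" "v < b" "firings z i a = firings z i b"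
  shows "\<not> fires_at z v i"
proof
  assume "fires_at z v i"
  moreover have "firings z i a \<le> firings z i v"
    using assms(1) by (rule firings_mono)
  ultimately have "firings z i a < firings z i (Suc v)"
    by simp
  also have "\<dots> \<le> firings z i b"
    using assms(2) by (intro firings_mono) simp
  finally show False
    using assms(3) by simp
qed

lemma firing_time_unique:
  assumes "fires_at z u i" "fires_at z v i" "firings z i u = firings z i v"
  shows "u = v"
  using not_fires_at_if_firings_eq[of u u v z i] not_fires_at_if_firings_eq[of v v u z i] assms
  by (cases u v rule: linorder_cases) auto

lemma node_state_stable:
  "a \<le> b \<Longrightarrow> firings z i a = firings z i b \<Longrightarrow> node_state z b i = node_state z a i"
proof (induction b)
  case (Suc b)
  show ?case
  proof (cases "a = Suc b")
    case False
    with Suc.prems have "a \<le> b" by simp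
    have "firings z i b = firings z i a"
      using firings_mono[of a b z i] firings_mono[of b "Suc b" z i] \<open>a \<le> b\<close> Suc.prems(2)
      by linarith
    moreover have "\<not> fires_at z b i"
      using not_fires_at_if_firings_eq[OF \<open>a \<le> b\<close> _ Suc.prems(2)] by simp
    ultimately show ?thesis
      using Suc.IH \<open>a \<le> b\<close> by (simp add: node_state_Suc)
  qed simp
qed simp

lemma edge_dir_stable:
  assumes "adj i j"
  shows "a \<le> b \<Longrightarrow> firings z i a = firings z i b \<Longrightarrow> firings z j a = firings z j b
    \<Longrightarrow> edge_dir z b {i, j} = edge_dir z a {i, j}"
proof (induction b)
  case (Suc b)
  show ?case
  proof (cases "a = Suc b")
    case False
    with Suc.prems have "a \<le> b" by simp
    have "firings z i b = firings z i a"
      using firings_mono[of a b z i] firings_mono[of b "Suc b" z i] \<open>a \<le> b\<close> Suc.prems(2)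
      by linarith
    moreover have "firings z j b = firings z j a"
      using firings_mono[of a b z j] firings_mono[of b "Suc b" z j] \<open>a \<le> b\<close> Suc.prems(3)
      by linarith
    moreover have "\<not> fires_at z b i" "\<not> fires_at z b j"
      using not_fires_at_if_firings_eq[OF \<open>a \<le> b\<close> _ Suc.prems(2)]
        not_fires_at_if_firings_eq[OF \<open>a \<le> b\<close> _ Suc.prems(3)] by simp_all
    ultimately show ?thesis
      using Suc.IH \<open>a \<le> b\<close> by (simp add: edge_dir_Suc[OF assms])
  qed simp
qed simp

lemma node_state_no_firings: "firings z i t = 0 \<Longrightarrow> node_state z t i = fst c0 i"
  using node_state_stable[of 0 t z i] by (simp add: node_state_0)

lemma node_state_after_firing:
  assumes "firings z i t = Suc n"
  obtains u where "u < t" "fires_at z u i" "firings z i u = n"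
    "node_state z t i = fst (f i (local_view adj (node_state z u) i))"
proof -
  obtain u where u: "u < t" "firings z i u = n" "firings z i (Suc u) = Suc n"
    by (rule stepwise_crossing[OF stepwise_firings, where a=0 and b=t and n=n]) (use assms in auto)
  then have "fires_at z u i"
    by (auto split: if_splits)
  moreover have "node_state z t i = node_state z (Suc u) i"
    using node_state_stable[of "Suc u" t] u assms by simp
  ultimately show ?thesis
    using that u by (simp add: node_state_Suc)
qed

definition same_view :: "(nat \<Rightarrow> 'i set) \<Rightarrow> (nat \<Rightarrow> 'i set) \<Rightarrow> 'i \<Rightarrow> nat \<Rightarrow> bool" where
  "same_view z z' i k \<longleftrightarrow> (\<forall>u u'. fires_at z u i \<longrightarrow> fires_at z' u' i
     \<longrightarrow> firings z i u = k \<longrightarrow> firings z' i u' = k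
     \<longrightarrow> local_view adj (node_state z u) i = local_view adj (node_state z' u') i)"

lemma same_view_commute: "same_view z z' i k \<longleftrightarrow> same_view z' z i k"
  unfolding same_view_def by auto

lemma node_state_eq:
  assumes "\<forall>k < firings z i t. same_view z z' i k" "firings z i t = firings z' i t'"
  shows "node_state z t i = node_state z' t' i"
proof (cases "firings z i t")
  case 0
  then show ?thesis
    using assms(2) by (simp add: node_state_no_firings)
next
  case (Suc n)
  obtain u where u: "fires_at z u i" "firings z i u = n"
      "node_state z t i = fst (f i (local_view adj (node_state z u) i))"
    using node_state_after_firing[OF Suc] .
  from Suc assms(2) have "firings z' i t' = Suc n" by simp
  then obtain u' where u': "fires_at z' u' i" "firings z' i u' = n"
      "node_state z' t' i = fst (f i (local_view adj (node_state z' u') i))"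
    by (rule node_state_after_firing)
  have "same_view z z' i n"
    using assms(1) Suc by simp
  then have "local_view adj (node_state z u) i = local_view adj (node_state z' u') i"
    using u(1,2) u'(1,2) unfolding same_view_def by blast
  then show ?thesis
    using u(3) u'(3) by simp
qed

definition edge_synced :: "(nat \<Rightarrow> 'i set) \<Rightarrow> nat \<Rightarrow> (nat \<Rightarrow> 'i set) \<Rightarrow> nat \<Rightarrow> 'i \<Rightarrow> 'i \<Rightarrow> bool"
  where "edge_synced z t z' t' i j \<longleftrightarrow>
    firings z i t = firings z' i t' \<and> firings z j t = firings z' j t'
    \<and> edge_dir z t {i, j} = edge_dir z' t' {i, j}"

lemma edge_synced_commute: "edge_synced z t z' t' i j \<longleftrightarrow> edge_synced z t z' t' j i"
  unfolding edge_synced_def by (auto simp: insert_commute)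

lemma edge_synced_Suc_left:
  assumes "adj i j" "edge_synced z u z' u' i j"
    and "fires_at z u i" "fires_at z' u' i \<or> fires_at z' u' j"
    and "same_view z z' i (firings z i u)"
  shows "edge_synced z (Suc u) z' (Suc u') i j"
proof -
  have "points_to (edge_dir z' u' {i, j}) {i, j} i"
    using fires_at_points_to[OF assms(3,1)] assms(2) by (simp add: edge_synced_def)
  then have "fires_at z' u' i" "\<not> fires_at z' u' j"
    using not_fires_at_if_points_to[OF assms(1)] assms(4) by auto
  moreover have "\<not> fires_at z u j"
    using adjacent_not_both_fire[OF assms(1,3)] .
  moreover have "firings z' i u' = firings z i u"
    using assms(2) by (simp add: edge_synced_def)
  then have "local_view adj (node_state z u) i = local_view adj (node_state z' u') i"
    using assms(3,5) \<open>fires_at z' u' i\<close> unfolding same_view_def by blast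
  ultimately show ?thesis
    using assms(2,3) by (simp add: edge_synced_def edge_dir_Suc[OF assms(1)])
qed

lemma edge_synced_Suc:
  assumes "adj i j" "edge_synced z u z' u' i j"
    and "fires_at z u i \<or> fires_at z u j" "fires_at z' u' i \<or> fires_at z' u' j"
    and "fires_at z u i \<Longrightarrow> same_view z z' i (firings z i u)"
    and "fires_at z u j \<Longrightarrow> same_view z z' j (firings z j u)"
  shows "edge_synced z (Suc u) z' (Suc u') i j"
  using assms(3)
proof
  assume "fires_at z u j"
  moreover have "edge_synced z u z' u' j i" "fires_at z' u' j \<or> fires_at z' u' i"
    using assms(2,4) edge_synced_commute by auto
  ultimately have "edge_synced z (Suc u) z' (Suc u') j i"
    using edge_synced_Suc_left adj_sym[OF assms(1)] assms(6) by blast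
  then show ?thesis
    using edge_synced_commute by blast
next
  assume "fires_at z u i"
  then show ?thesis
    using edge_synced_Suc_left[OF assms(1,2) _ assms(4)] assms(5) by blast
qed

lemma last_joint_firing:
  assumes "adj i j" "firings z i t + firings z j t = Suc n"
  obtains u where "u < t" "firings z i u + firings z j u = n" "fires_at z u i \<or> fires_at z u j"
    "edge_synced z t z (Suc u) i j"
proof -
  obtain u where u: "u < t" "firings z i u + firings z j u = n"
      "firings z i (Suc u) + firings z j (Suc u) = Suc n"
    by (rule stepwise_crossing[OF stepwise_firings_sum[OF assms(1)], where a=0 and b=t and n=n])
      (use assms(2) in auto)
  have "firings z i (Suc u) \<le> firings z i t" "firings z j (Suc u) \<le> firings z j t"
    using u(1) by (meson Suc_leI firings_mono)+
  then have "firings z i t = firings z i (Suc u)" "firings z j t = firings z j (Suc u)"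
    using u(3) assms(2) by linarith+
  moreover have "edge_dir z t {i, j} = edge_dir z (Suc u) {i, j}"
    using edge_dir_stable[OF assms(1), of "Suc u" t] u(1) calculation by simp
  moreover have "fires_at z u i \<or> fires_at z u j"
    using u(2,3) by (auto split: if_splits)
  ultimately show ?thesis
    using that u(1,2) by (simp add: edge_synced_def)
qed

text \<open>Induction on the number of firings at the edge: the last one was made by the endpoint the
  indicator pointed to, in both runs alike.\<close>

lemma edge_synced_if_firings_sum_eq:
  assumes "adj i j"
  shows "firings z i t + firings z j t = n \<Longrightarrow> firings z' i t' + firings z' j t' = n
    \<Longrightarrow> \<forall>k < firings z i t. same_view z z' i k \<Longrightarrow> \<forall>k < firings z j t. same_view z z' j k
    \<Longrightarrow> edge_synced z t z' t' i j"
proof (induction n arbitrary: t t')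
  case 0
  then have "edge_dir z t {i, j} = snd c0 {i, j}" "edge_dir z' t' {i, j} = snd c0 {i, j}"
    using edge_dir_stable[OF assms, of 0 t z] edge_dir_stable[OF assms, of 0 t' z']
    by (simp_all add: edge_dir_0)
  with "0.prems"(1,2) show ?case
    by (simp add: edge_synced_def)
next
  case (Suc n)
  obtain u where u: "u < t" "firings z i u + firings z j u = n" "fires_at z u i \<or> fires_at z u j"
      "edge_synced z t z (Suc u) i j"
    using last_joint_firing[OF assms Suc.prems(1)] .
  obtain u' where u': "firings z' i u' + firings z' j u' = n" "fires_at z' u' i \<or> fires_at z' u' j"
      "edge_synced z' t' z' (Suc u') i j"
    using last_joint_firing[OF assms Suc.prems(2)] .
  have "firings z l u \<le> firings z l t" for l
    using u(1) by (simp add: firings_mono)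
  then have "\<forall>k < firings z i u. same_view z z' i k" "\<forall>k < firings z j u. same_view z z' j k"
    using Suc.prems(3,4) by (meson less_le_trans)+
  then have "edge_synced z u z' u' i j"
    using Suc.IH[OF u(2) u'(1)] by blast
  moreover have "same_view z z' l (firings z l u)" if "fires_at z u l" "l \<in> {i, j}" for l
  proof -
    have "firings z l u < firings z l t"
      using u(4) that by (auto simp: edge_synced_def)
    then show ?thesis
      using Suc.prems(3,4) that(2) by blast
  qed
  ultimately have "edge_synced z (Suc u) z' (Suc u') i j"
    using edge_synced_Suc[OF assms _ u(3) u'(2)] by blast
  with u(4) u'(3) show ?case
    by (simp add: edge_synced_def)
qed

lemma edge_frozen:
  assumes "adj i j" "points_to (edge_dir z w {i, j}) {i, j} i"
  shows "w \<le> u \<Longrightarrow> firings z i u = firings z i w \<Longrightarrow> edge_synced z u z w i j"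
proof (induction u)
  case (Suc u)
  show ?case
  proof (cases "w = Suc u")
    case False
    with Suc.prems have "w \<le> u" by simp
    then have "firings z i u = firings z i w"
      using firings_mono[of w u z i] firings_mono[of u "Suc u" z i] Suc.prems(2) by linarith
    then have "edge_synced z u z w i j" "\<not> fires_at z u i"
      using Suc.IH \<open>w \<le> u\<close> Suc.prems(2) by (auto split: if_splits)
    moreover have "\<not> fires_at z u j"
      using not_fires_at_if_points_to[OF assms(1)] assms(2) calculation(1)
      by (simp add: edge_synced_def)
    ultimately show ?thesis
      by (simp add: edge_synced_def edge_dir_Suc[OF assms(1)])
  qed (simp add: edge_synced_def)
qed (simp add: edge_synced_def)

definition replayed :: "(nat \<Rightarrow> 'i set) \<Rightarrow> (nat \<Rightarrow> 'i set) \<Rightarrow> nat \<Rightarrow> bool" where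
  "replayed z z' s \<longleftrightarrow> (\<forall>i k. k < firings z i s
     \<longrightarrow> (\<exists>u'. fires_at z' u' i \<and> firings z' i u' = k) \<and> same_view z z' i k)"

lemma replayed_same_view: "replayed z z' s \<Longrightarrow> k < firings z i s \<Longrightarrow> same_view z z' i k"
  by (simp add: replayed_def)

lemma replayed_firings_reached:
  assumes "replayed z z' s" "k \<le> firings z i s"
  obtains t' where "firings z' i t' = k"
proof (cases k)
  case 0
  then show ?thesis
    using that[of 0] by simp
next
  case (Suc k')
  with assms(2) have "k' < firings z i s" by simp
  then obtain u' where "fires_at z' u' i" "firings z' i u' = k'"
    using assms(1) unfolding replayed_def by blast
  then show ?thesis
    using that[of "Suc u'"] Suc by simp
qed

text \<open>At the time w of run z' matching time s of run z the edge points to i; since i does not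
  fire again before u', neither does j.\<close>

lemma neighbour_firings_eq_if_le:
  assumes "adj i j" "fires_at z s i" "firings z' i u' = firings z i s"
    and "firings z j s \<le> firings z' j u'"
    and "\<forall>k < firings z i s. same_view z z' i k" "\<forall>k < firings z j s. same_view z z' j k"
  shows "firings z' j u' = firings z j s"
proof -
  obtain w where w: "w \<le> u'" "firings z' i w + firings z' j w = firings z i s + firings z j s"
    by (rule stepwise_attains[OF stepwise_firings_sum[OF assms(1), of z'],
          where a=0 and b=u' and k="firings z i s + firings z j s"])
      (use assms(3,4) in auto)
  then have sync: "edge_synced z s z' w i j"
    using edge_synced_if_firings_sum_eq[OF assms(1) refl] assms(5,6) by simp
  then have "points_to (edge_dir z' w {i, j}) {i, j} i"
    using fires_at_points_to[OF assms(2,1)] by (simp add: edge_synced_def)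
  moreover have "firings z' i u' = firings z' i w"
    using sync assms(3) by (simp add: edge_synced_def)
  ultimately have "edge_synced z' u' z' w i j"
    using edge_frozen[OF assms(1)] w(1) by blast
  with sync show ?thesis
    by (simp add: edge_synced_def)
qed

lemma neighbour_firings_eq:
  assumes "replayed z z' s" "adj i j" "fires_at z s i" "fires_at z' u' i"
    and "firings z' i u' = firings z i s"
  shows "firings z' j u' = firings z j s"
proof (cases "firings z j s \<le> firings z' j u'")
  case True
  then show ?thesis
    using neighbour_firings_eq_if_le[OF assms(2,3,5) True] replayed_same_view[OF assms(1)] by blast
next
  case False
  then have "\<forall>k < firings z' i u'. same_view z' z i k" "\<forall>k < firings z' j u'. same_view z' z j k"
    using replayed_same_view[OF assms(1)] assms(5) same_view_commute by auto
  then show ?thesis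
    using neighbour_firings_eq_if_le[OF assms(2,4), of z s] assms(5) False by simp
qed

lemma firings_le_if_no_firing_at:
  assumes "\<And>u. fires_at z u i \<Longrightarrow> firings z i u \<noteq> k"
  shows "firings z i t \<le> k"
proof (rule ccontr)
  assume "\<not> firings z i t \<le> k"
  obtain u where "firings z i u = k" "firings z i (Suc u) = Suc k"
    by (rule stepwise_crossing[OF stepwise_firings, where a=0 and b=t and n=k])
      (use \<open>\<not> firings z i t \<le> k\<close> in auto)
  then show False
    using assms[of u] by (auto split: if_splits)
qed

lemma eventually_points_to:
  assumes "replayed z z' s" "fires_at z s i" "adj i j"
    and bounded: "\<And>u. firings z' i u \<le> firings z i s"
  obtains w where "\<And>u. w \<le> u \<Longrightarrow> points_to (edge_dir z' u {i, j}) {i, j} i"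
proof -
  obtain ti where ti: "firings z' i ti = firings z i s"
    using replayed_firings_reached[OF assms(1)] by blast
  obtain tj where tj: "firings z' j tj = firings z j s"
    using replayed_firings_reached[OF assms(1)] by blast
  have "firings z i s \<le> firings z' i (max ti tj)" "firings z j s \<le> firings z' j (max ti tj)"
    using ti tj firings_mono[of ti "max ti tj" z' i] firings_mono[of tj "max ti tj" z' j] by simp_all
  moreover obtain w where w: "firings z' i w + firings z' j w = firings z i s + firings z j s"
    by (rule stepwise_attains[OF stepwise_firings_sum[OF assms(3), of z'],
          where a=0 and b="max ti tj" and k="firings z i s + firings z j s"])
      (use calculation in auto)
  then have sync: "edge_synced z s z' w i j"
    using edge_synced_if_firings_sum_eq[OF assms(3) refl] replayed_same_view[OF assms(1)] by simp
  then have at_w: "points_to (edge_dir z' w {i, j}) {i, j} i"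
    using fires_at_points_to[OF assms(2,3)] by (simp add: edge_synced_def)
  have "points_to (edge_dir z' u {i, j}) {i, j} i" if "w \<le> u" for u
  proof -
    have "firings z' i u = firings z' i w"
      using sync bounded[of u] firings_mono[OF that, of z' i] by (simp add: edge_synced_def)
    then show ?thesis
      using edge_frozen[OF assms(3) at_w that] at_w by (simp add: edge_synced_def)
  qed
  then show ?thesis
    using that by blast
qed

lemma fair_fires_eventually:
  assumes "fair_schedule z"
    and "\<And>j. adj i j \<Longrightarrow> \<exists>w. \<forall>u\<ge>w. points_to (edge_dir z u {i, j}) {i, j} i"
  obtains u where "t \<le> u" "fires_at z u i"
proof -
  obtain w where w: "\<And>j u. adj i j \<Longrightarrow> w j \<le> u \<Longrightarrow> points_to (edge_dir z u {i, j}) {i, j} i"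
    using assms(2) by metis
  define T where "T = Max (insert t (w ` {j. adj i j}))"
  have fin: "finite (insert t (w ` {j. adj i j}))"
    using finite_neighbours by simp
  obtain u where u: "T \<le> u" "i \<in> z u"
    using assms(1) unfolding fair_schedule_def by blast
  have "t \<le> u" "\<And>j. adj i j \<Longrightarrow> w j \<le> u"
    using u(1) Max_ge[OF fin] unfolding T_def by (auto intro: order_trans)
  then show ?thesis
    using that u(2) w unfolding fires_at_def fires_def applicable_def by blast
qed

lemma replayed_firing_exists:
  assumes "fair_schedule z'" "replayed z z' s" "fires_at z s i"
  shows "\<exists>u'. fires_at z' u' i \<and> firings z' i u' = firings z i s"
proof (rule ccontr)
  assume none: "\<nexists>u'. fires_at z' u' i \<and> firings z' i u' = firings z i s"
  then have bounded: "firings z' i u \<le> firings z i s" for u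
    using firings_le_if_no_firing_at by blast
  obtain t0 where t0: "firings z' i t0 = firings z i s"
    using replayed_firings_reached[OF assms(2)] by blast
  have "\<exists>w. \<forall>u\<ge>w. points_to (edge_dir z' u {i, j}) {i, j} i" if "adj i j" for j
    using eventually_points_to[OF assms(2,3) that bounded] by blast
  then obtain u where "t0 \<le> u" "fires_at z' u i"
    using fair_fires_eventually[OF assms(1)] by blast
  moreover have "firings z' i u = firings z i s"
    using bounded[of u] firings_mono[OF \<open>t0 \<le> u\<close>, of z' i] t0 by simp
  ultimately show False
    using none by blast
qed

lemma same_view_at_firing:
  assumes "replayed z z' s" "fires_at z s i" "fires_at z' u' i"
    and "firings z' i u' = firings z i s"
  shows "local_view adj (node_state z s) i = local_view adj (node_state z' u') i"
proof
  fix j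
  have "node_state z s j = node_state z' u' j" if "j = i \<or> adj i j"
  proof -
    have "firings z j s = firings z' j u'"
      using that assms neighbour_firings_eq by auto
    then show ?thesis
      using node_state_eq replayed_same_view[OF assms(1)] by blast
  qed
  then show "local_view adj (node_state z s) i j = local_view adj (node_state z' u') i j"
    unfolding local_view_def by simp
qed

lemma replayed_Suc:
  assumes "fair_schedule z'" "replayed z z' s"
  shows "replayed z z' (Suc s)"
  unfolding replayed_def
proof (intro allI impI)
  fix i k
  assume k: "k < firings z i (Suc s)"
  show "(\<exists>u'. fires_at z' u' i \<and> firings z' i u' = k) \<and> same_view z z' i k"
  proof (cases "k < firings z i s")
    case True
    then show ?thesis
      using assms(2) unfolding replayed_def by blast
  next
    case False
    with k have fires: "fires_at z s i" and k_eq: "k = firings z i s"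
      by (auto split: if_splits)
    have "same_view z z' i k"
      unfolding same_view_def
    proof (intro allI impI)
      fix u u'
      assume "fires_at z u i" "fires_at z' u' i" "firings z i u = k" "firings z' i u' = k"
      moreover from this have "u = s"
        using firing_time_unique fires k_eq by blast
      ultimately show "local_view adj (node_state z u) i = local_view adj (node_state z' u') i"
        using same_view_at_firing[OF assms(2) fires] k_eq by blast
    qed
    then show ?thesis
      using replayed_firing_exists[OF assms fires] k_eq by blast
  qed
qed

lemma replayed_if_fair:
  assumes "fair_schedule z'"
  shows "replayed z z' s"
proof (induction s)
  case 0
  then show ?case by (simp add: replayed_def)
next
  case (Suc s)
  then show ?case by (rule replayed_Suc[OF assms])
qed

lemma node_state_eq_if_fair:
  "fair_schedule z' \<Longrightarrow> firings z i t = firings z' i t' \<Longrightarrow> node_state z t i = node_state z' t' i"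
  using node_state_eq replayed_same_view[OF replayed_if_fair] by blast

lemma range_firings_subset_if_fair:
  assumes "fair_schedule z'"
  shows "range (firings z i) \<subseteq> range (firings z' i)"
proof
  fix k
  assume "k \<in> range (firings z i)"
  then obtain t where "firings z i t = k" by blast
  have "replayed z z' t"
    using assms by (rule replayed_if_fair)
  then obtain t' where "firings z' i t' = k"
    by (rule replayed_firings_reached[where k=k and i=i]) (use \<open>firings z i t = k\<close> in simp)
  then show "k \<in> range (firings z' i)" by blast
qed

theorem history_schedule_invariant:
  assumes "fair_schedule z" "fair_schedule z'"
  shows "history (\<lambda>t. node_state z t i) = history (\<lambda>t. node_state z' t i)"
proof -
  define Y where "Y k = node_state z (SOME t. firings z i t = k) i" for k
  have Y: "node_state w t i = Y (firings w i t)" if "fair_schedule w" for w t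
  proof -
    have "\<exists>t0. firings z i t0 = firings w i t"
      using range_firings_subset_if_fair[OF assms(1), of w i] by (metis rangeE rangeI subsetD)
    then have "firings z i (SOME t0. firings z i t0 = firings w i t) = firings w i t"
      by (rule someI_ex)
    then show ?thesis
      unfolding Y_def using node_state_eq_if_fair[OF that] by metis
  qed
  have "history (\<lambda>t. node_state w t i) = (\<lambda>k. remdups_adj (map Y [0..<Suc k])) ` range (firings w i)"
    if "fair_schedule w" for w
    by (rule history_reindex) (simp_all add: stepwise_firings Y[OF that])
  moreover have "range (firings z i) = range (firings z' i)"
    using range_firings_subset_if_fair assms by blast
  ultimately show ?thesis
    using assms by simp
qed

end

theorem mainTheorem1:
  fixes adj :: "'i::linorder \<Rightarrow> 'i \<Rightarrow> bool"
    and f :: "'i \<Rightarrow> ('i \<Rightarrow> 's) \<Rightarrow> 's \<times> ('i \<Rightarrow> dir)"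
    and \<sigma>0 :: "'i \<Rightarrow> 's" and \<delta>0 :: "'i set \<Rightarrow> dir"
    and \<zeta> \<zeta>' :: "nat \<Rightarrow> 'i set"
  assumes "\<forall>i j. adj i j \<longrightarrow> adj j i"
    and "\<forall>i. \<not> adj i i"
    and "\<forall>i. finite {j. adj i j}"
    and "fair_schedule \<zeta>" and "fair_schedule \<zeta>'"
  shows "\<forall>i. history (\<lambda>t. fst (run adj f \<zeta> (\<sigma>0, \<delta>0) t) i)
           = history (\<lambda>t. fst (run adj f \<zeta>' (\<sigma>0, \<delta>0) t) i)"
proof -
  interpret flip_network adj f "(\<sigma>0, \<delta>0)"
    using assms(1-3) by unfold_locales blast+
  show ?thesis
    using history_schedule_invariant[OF assms(4,5)] by (simp add: node_state_def)
qed

end
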